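(* The Hopf algebras $\mathsf{cf}(\mathrm{UT}_\bullet)$ and $\mathsf{scf}(\mathrm{UT}_\bullet)$ are noncommutative and noncocommutative.
   Context: Fix the finite field $\mathbb{F}_q$; $[n]=\{1,\dots,n\}$. $\mathrm{UT}_n$ is the group of $n\times n$ unipotent upper triangular matrices over $\mathbb{F}_q$; $\mathsf{cf}$ denotes complex class functions. Hopf algebra $\mathsf{cf}(\mathrm{UT}_\bullet)=\bigoplus_n\mathsf{cf}(\mathrm{UT}_n)$: for $I\subseteq[n]$, $I^c=[n]\setminus I$, let $\mathrm{UL}_I=\{g\in\mathrm{UT}_n:(g-1_n)_{i,j}\ne0\text{ only if }(i,j)\in I\times I\cup I^c\times I^c\}$, $\mathrm{UR}_I=\{g:(g-1_n)_{i,j}\ne0\text{ only if }(i,j)\in I\times I^c\}$, $\mathrm{UP}_I=\{g:(g-1_n)_{i,j}=0\text{ for }(i,j)\in I^c\times I\}=\mathrm{UL}_I\ltimes\mathrm{UR}_I$ ($\mathrm{UP}_{[i]}=\mathrm{UT}_n$). With $\mathrm{cano}_I:I\to[|I|]$ order-preserving, $\mathrm{UL}_I\cong\mathrm{UT}_{|I|}\times\mathrm{UT}_{|I^c|}$ by relabelling the diagonal blocks, inducing $\mathrm{st}_{(I,I^c)}:\mathsf{cf}(\mathrm{UL}_I)\to\mathsf{cf}(\mathrm{UT}_{|I|})\otimes\mathsf{cf}(\mathrm{UT}_{|I^c|})$. Product $\mu=\bigoplus_{n\ge i\ge0}\mathrm{Inf}^{\mathrm{UT}_n}_{\mathrm{UL}_{[i]}}\circ\mathrm{st}^{-1}_{([i],[i]^c)}$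 with $\mathrm{Inf}\psi(lr)=\psi(l)$; coproduct $\Delta=\bigoplus_n\sum_{I\subseteq[n]}\mathrm{st}_{(I,I^c)}\circ\mathrm{Def}^{\mathrm{UP}_I}_{\mathrm{UL}_I}\circ\mathrm{Res}^{\mathrm{UT}_n}_{\mathrm{UP}_I}$ with $\mathrm{Def}\psi(g)=\frac1{|\mathrm{UR}_I|}\sum_{x\in\mathrm{UR}_I}\psi(gx)$. A natural unit interval order of $[n]$ is a partial order $\pi\subseteq[n]\times[n]$ with $(i,j)\in\pi\Rightarrow i\le j$ such that for every $(j,k)\in\pi$ with $j\ne k$, all $(i,l)$ with $i\le j$, $k\le l$ lie in $\pi$. For such $\pi$, $\mathrm{UT}(\pi)=\{g\in\mathrm{UT}_n:(g-1_n)_{i,j}\ne0\text{ only if }(i,j)\in\pi\}$, and $\mathsf{scf}(\mathrm{UT}_n)$ is the span of the characters $\mathrm{Ind}^{\mathrm{UT}_n}_{\mathrm{UT}(\pi)}(\mathbb{1})$ over all natural unit interval orders $\pi$ of $[n]$; $\mathsf{scf}(\mathrm{UT}_\bullet)=\bigoplus_n\mathsf{scf}(\mathrm{UT}_n)$ is a sub-Hopf algebra of $\mathsf{cf}(\mathrm{UT}_\bullet)$. *)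

theory Defs
  imports Complex_Main "HOL-Algebra.Group"
begin

text \<open>Matrices over the finite field are functions nat => nat => 'a; an element of UT_n
  has indices in {1..n}: ones on the diagonal of {1..n}, entries only strictly above the
  diagonal inside {1..n}, and zero everywhere else.\<close>

type_synonym 'a mat = "nat \<Rightarrow> nat \<Rightarrow> 'a"

definition UT :: "nat \<Rightarrow> ('a::field) mat set" where
  "UT n = {g. \<forall>i j.
      (i = j \<longrightarrow> g i j = (if 1 \<le> i \<and> i \<le> n then 1 else 0)) \<and>
      (i \<noteq> j \<and> \<not> (1 \<le> i \<and> i < j \<and> j \<le> n) \<longrightarrow> g i j = 0)}"

definition mat_mult :: "nat \<Rightarrow> ('a::field) mat \<Rightarrow> 'a mat \<Rightarrow> 'a mat" where
  "mat_mult n g h = (\<lambda>i j. \<Sum>k\<in>{1..n}. g i k * h k j)"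

definition mat_one :: "nat \<Rightarrow> ('a::field) mat" where
  "mat_one n = (\<lambda>i j. if i = j \<and> 1 \<le> i \<and> i \<le> n then 1 else 0)"

definition UT_grp :: "nat \<Rightarrow> ('a::field) mat monoid" where
  "UT_grp n = \<lparr>carrier = UT n, mult = mat_mult n, one = mat_one n\<rparr>"

definition cf :: "nat \<Rightarrow> (('a::{finite,field}) mat \<Rightarrow> complex) set" where
  "cf n = {f. (\<forall>g. g \<notin> UT n \<longrightarrow> f g = 0) \<and>
     (\<forall>g\<in>UT n. \<forall>x\<in>UT n.
        f (mat_mult n (mat_mult n x g) (m_inv (UT_grp n) x)) = f g)}"

text \<open>Elements of cf(UT_bullet) = direct sum over n of cf(UT_n): finitely supported families.\<close>
definition cfUT :: "(nat \<Rightarrow> ('a::{finite,field}) mat \<Rightarrow> complex) set" where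
  "cfUT = {x. (\<forall>n. x n \<in> cf n) \<and> finite {n. x n \<noteq> (\<lambda>_. 0)}}"

text \<open>Diagonal blocks for I = [i]: the upper-left i x i block and the lower-right block,
  relabelled to UT_i and UT_(n-i).\<close>
definition topblk :: "nat \<Rightarrow> ('a::field) mat \<Rightarrow> 'a mat" where
  "topblk i g = (\<lambda>a b. if 1 \<le> a \<and> a \<le> i \<and> 1 \<le> b \<and> b \<le> i then g a b else 0)"

definition botblk :: "nat \<Rightarrow> nat \<Rightarrow> ('a::field) mat \<Rightarrow> 'a mat" where
  "botblk i n g = (\<lambda>a b. if 1 \<le> a \<and> a \<le> n - i \<and> 1 \<le> b \<and> b \<le> n - i
                          then g (a + i) (b + i) else 0)"

text \<open>The product mu, with the tensor x_i (x) y_j identified with the function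
  (g,h) |-> x_i g * y_j h on UT_i x UT_j: Inf of st^{-1} evaluated at g in UT_n is the value
  at the block diagonal part of g.\<close>
definition cf_mult ::
  "(nat \<Rightarrow> ('a::{finite,field}) mat \<Rightarrow> complex) \<Rightarrow> (nat \<Rightarrow> 'a mat \<Rightarrow> complex)
     \<Rightarrow> nat \<Rightarrow> 'a mat \<Rightarrow> complex" where
  "cf_mult x y n g = (if g \<in> UT n then
      (\<Sum>i\<in>{0..n}. x i (topblk i g) * y (n - i) (botblk i n g)) else 0)"

text \<open>cano_I : I -> [|I|] order preserving (1-based).\<close>
definition cano :: "nat set \<Rightarrow> nat \<Rightarrow> nat" where
  "cano I i = card {k\<in>I. k \<le> i}"

text \<open>st^{-1}_{(I,I^c)}: the element of UL_I with diagonal blocks g (on I) and h (on I^c).\<close>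
definition embed :: "nat set \<Rightarrow> nat \<Rightarrow> ('a::field) mat \<Rightarrow> 'a mat \<Rightarrow> 'a mat" where
  "embed I n g h = (\<lambda>i j. let J = {1..n} - I in
      if i \<in> I \<and> j \<in> I then g (cano I i) (cano I j)
      else if i \<in> J \<and> j \<in> J then h (cano J i) (cano J j) else 0)"

definition UR :: "nat \<Rightarrow> nat set \<Rightarrow> ('a::field) mat set" where
  "UR n I = {r \<in> UT n. \<forall>i j. i \<noteq> j \<and> r i j \<noteq> 0 \<longrightarrow> i \<in> I \<and> j \<in> {1..n} - I}"

text \<open>The coproduct Delta; the component in cf(UT_a) (x) cf(UT_b) is identified with a function
  on UT_a x UT_b. It is the sum over I subset [a+b] with |I| = a of
  st o Def o Res applied to the degree a+b component.\<close>
definition cf_comult ::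
  "(nat \<Rightarrow> ('a::{finite,field}) mat \<Rightarrow> complex) \<Rightarrow> nat \<Rightarrow> nat \<Rightarrow> 'a mat \<times> 'a mat \<Rightarrow> complex" where
  "cf_comult x a b p = (case p of (g, h) \<Rightarrow>
     if g \<in> UT a \<and> h \<in> UT b then
       (\<Sum>I\<in>{I. I \<subseteq> {1..a+b} \<and> card I = a}.
          (1 / of_nat (card (UR (a+b) I :: 'a mat set))) *
          (\<Sum>r\<in>UR (a+b) I. x (a+b) (mat_mult (a+b) (embed I (a+b) g h) r)))
     else 0)"

definition nuio :: "nat \<Rightarrow> (nat \<times> nat) set \<Rightarrow> bool" where
  "nuio n \<pi> \<longleftrightarrow> partial_order_on {1..n} \<pi> \<and>
     (\<forall>(i,j)\<in>\<pi>. i \<le> j) \<and>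
     (\<forall>(j,k)\<in>\<pi>. j \<noteq> k \<longrightarrow> (\<forall>i l. 1 \<le> i \<and> i \<le> j \<and> k \<le> l \<and> l \<le> n \<longrightarrow> (i,l) \<in> \<pi>))"

definition UTpi :: "nat \<Rightarrow> (nat \<times> nat) set \<Rightarrow> ('a::field) mat set" where
  "UTpi n \<pi> = {g \<in> UT n. \<forall>i j. i \<noteq> j \<and> g i j \<noteq> 0 \<longrightarrow> (i,j) \<in> \<pi>}"

definition indchar :: "nat \<Rightarrow> (nat \<times> nat) set \<Rightarrow> ('a::{finite,field}) mat \<Rightarrow> complex" where
  "indchar n \<pi> g = (if g \<in> UT n then
      (1 / of_nat (card (UTpi n \<pi> :: 'a mat set))) *
      of_nat (card {x \<in> UT n. mat_mult n (mat_mult n (m_inv (UT_grp n) x) g) x \<in> UTpi n \<pi>})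
    else 0)"

definition scf :: "nat \<Rightarrow> (('a::{finite,field}) mat \<Rightarrow> complex) set" where
  "scf n = {f. \<exists>S c. finite S \<and> S \<subseteq> {indchar n \<pi> | \<pi>. nuio n \<pi>} \<and>
              f = (\<lambda>g. \<Sum>\<chi>\<in>S. c \<chi> * \<chi> g)}"

definition scfUT :: "(nat \<Rightarrow> ('a::{finite,field}) mat \<Rightarrow> complex) set" where
  "scfUT = {x \<in> cfUT. \<forall>n. x n \<in> scf n}"

definition noncommutative_on :: "(nat \<Rightarrow> ('a::{finite,field}) mat \<Rightarrow> complex) set \<Rightarrow> bool" where
  "noncommutative_on A \<longleftrightarrow> (\<exists>x\<in>A. \<exists>y\<in>A. cf_mult x y \<noteq> cf_mult y x)"

definition noncocommutative_on :: "(nat \<Rightarrow> ('a::{finite,field}) mat \<Rightarrow> complex) set \<Rightarrow> bool" where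
  "noncocommutative_on A \<longleftrightarrow>
     (\<exists>x\<in>A. cf_comult x \<noteq> (\<lambda>a b p. cf_comult x b a (snd p, fst p)))"

end

theory Submission
  imports Defs
begin

(* Both claims are witnessed by elements concentrated in a single degree, namely induced characters
   Ind_{UT(pi)}^{UT_n}(1) for natural unit interval orders pi. Such a pi is a normal pattern, so
   UT(pi) is normal in UT_n and the induced character is the constant |UT_n| / |UT(pi)| on UT(pi)
   and zero elsewhere.

   Noncommutativity: for the regular characters of UT_1 and UT_2 (pi the identity order), the two
   products differ at 1 + E_12 in UT_3, whose upper left 2 x 2 block is not the identity.

   Noncocommutativity: for pi = id + {(1,4), (2,4)} and c = |UT_4| / |UT(pi)|, the (1,3)-component
   of the coproduct at (1, 1 + E_23) gets a nonzero contribution only from I = {3}, namely c / |UR_I|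
   = c / q, while the (3,1)-component at (1 + E_23, 1) gets one only from I = {1,2,4}, namely c / q^2.
   In every other summand the embedded transvection 1 + E_ab has (a,b) outside pi and outside the
   support of UR_I, so no element of the coset lies in UT(pi). *)

section \<open>Unitriangular matrices\<close>

lemma UT_iff:
  "g \<in> UT n \<longleftrightarrow>
     (\<forall>i j. g i j \<noteq> 0 \<longrightarrow> 1 \<le> i \<and> i \<le> j \<and> j \<le> n) \<and> (\<forall>i. 1 \<le> i \<and> i \<le> n \<longrightarrow> g i i = 1)"
proof
  assume "g \<in> UT n"
  then have diag: "g i i = (if 1 \<le> i \<and> i \<le> n then 1 else 0)"
    and off: "i \<noteq> j \<Longrightarrow> \<not> (1 \<le> i \<and> i < j \<and> j \<le> n) \<Longrightarrow> g i j = 0" for i j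
    unfolding UT_def by blast+
  have "1 \<le> i \<and> i \<le> j \<and> j \<le> n" if "g i j \<noteq> 0" for i j
  proof (cases "i = j")
    case True
    with diag[of i] that show ?thesis by (simp split: if_splits)
  next
    case False
    with off[of i j] that show ?thesis by linarith
  qed
  with diag show "(\<forall>i j. g i j \<noteq> 0 \<longrightarrow> 1 \<le> i \<and> i \<le> j \<and> j \<le> n) \<and>
      (\<forall>i. 1 \<le> i \<and> i \<le> n \<longrightarrow> g i i = 1)"
    by simp
next
  assume H: "(\<forall>i j. g i j \<noteq> 0 \<longrightarrow> 1 \<le> i \<and> i \<le> j \<and> j \<le> n) \<and>
      (\<forall>i. 1 \<le> i \<and> i \<le> n \<longrightarrow> g i i = 1)"
  show "g \<in> UT n"
    unfolding UT_def
  proof (intro CollectI allI conjI impI)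
    fix i j
    show "i = j \<Longrightarrow> g i j = (if 1 \<le> i \<and> i \<le> n then 1 else 0)"
      using H by force
    show "i \<noteq> j \<and> \<not> (1 \<le> i \<and> i < j \<and> j \<le> n) \<Longrightarrow> g i j = 0"
      using H by (metis le_neq_implies_less)
  qed
qed

lemma UT_nonzero_entry: "g \<in> UT n \<Longrightarrow> g i j \<noteq> 0 \<Longrightarrow> 1 \<le> i \<and> i \<le> j \<and> j \<le> n"
  by (simp add: UT_iff)

lemma UT_diag: "g \<in> UT n \<Longrightarrow> 1 \<le> i \<Longrightarrow> i \<le> n \<Longrightarrow> g i i = 1"
  by (simp add: UT_iff)

lemma UT_entry_outside: "g \<in> UT n \<Longrightarrow> \<not> (i \<in> {1..n} \<and> j \<in> {1..n}) \<Longrightarrow> g i j = 0"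
  using UT_nonzero_entry by fastforce

lemma mat_eqI:
  assumes "\<And>i j. i \<in> {1..n} \<Longrightarrow> j \<in> {1..n} \<Longrightarrow> A i j = B i j"
    and "\<And>i j. \<not> (i \<in> {1..n} \<and> j \<in> {1..n}) \<Longrightarrow> A i j = 0"
    and "\<And>i j. \<not> (i \<in> {1..n} \<and> j \<in> {1..n}) \<Longrightarrow> B i j = 0"
  shows "A = B"
  using assms by (intro ext) metis

lemma finite_UT: "finite (UT n :: ('a::{finite,field}) mat set)"
proof -
  let ?B = "{1..n} \<times> {1..n}"
  let ?f = "\<lambda>g::'a mat. restrict (case_prod g) ?B"
  have "inj_on ?f (UT n)"
  proof (rule inj_onI, rule mat_eqI)
    fix g h :: "'a mat" and i j assume "?f g = ?f h" "i \<in> {1..n}" "j \<in> {1..n}"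
    then have "?f g (i, j) = ?f h (i, j)" by simp
    with \<open>i \<in> {1..n}\<close> \<open>j \<in> {1..n}\<close> show "g i j = h i j" by simp
  qed (simp_all add: UT_entry_outside)
  moreover have "?f ` UT n \<subseteq> ?B \<rightarrow>\<^sub>E UNIV" by (auto simp: image_subset_iff)
  moreover have "finite (?B \<rightarrow>\<^sub>E (UNIV :: 'a set))" by (rule finite_PiE) auto
  ultimately show ?thesis by (meson finite_imageD finite_subset)
qed

lemma mat_one_UT: "mat_one n \<in> UT n"
  by (simp add: UT_iff mat_one_def)

lemma mat_mult_UT:
  assumes g: "g \<in> UT n" and h: "h \<in> UT n"
  shows "mat_mult n g h \<in> UT n"
  unfolding UT_iff
proof safe
  fix i j assume "mat_mult n g h i j \<noteq> 0"
  then obtain k where "g i k * h k j \<noteq> 0"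
    unfolding mat_mult_def by (meson sum.not_neutral_contains_not_neutral)
  then show "1 \<le> i" "i \<le> j" "j \<le> n"
    using UT_nonzero_entry[OF g, of i k] UT_nonzero_entry[OF h, of k j] by auto
next
  fix i assume i: "1 \<le> i" "i \<le> n"
  have "g i k * h k i = (if k = i then 1 else 0)" for k
  proof (cases "k = i")
    case True
    then show ?thesis using UT_diag[OF g i] UT_diag[OF h i] by simp
  next
    case False
    then have "g i k = 0 \<or> h k i = 0"
      using UT_nonzero_entry[OF g, of i k] UT_nonzero_entry[OF h, of k i] by fastforce
    with False show ?thesis by auto
  qed
  with i show "mat_mult n g h i i = 1" by (simp add: mat_mult_def)
qed

lemma mat_mult_assoc: "mat_mult n (mat_mult n a b) c = mat_mult n a (mat_mult n b c)"
  unfolding mat_mult_def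
  by (intro ext) (simp add: sum_distrib_left sum_distrib_right mult.assoc, rule sum.swap)

lemma mat_mult_one_left: "g \<in> UT n \<Longrightarrow> mat_mult n (mat_one n) g = g"
proof (rule ext, rule ext)
  fix i j assume g: "g \<in> UT n"
  have "mat_mult n (mat_one n) g i j = (\<Sum>k\<in>{1..n}. if k = i then g i j else 0)"
    unfolding mat_mult_def mat_one_def by (rule sum.cong) auto
  also have "\<dots> = g i j" using UT_nonzero_entry[OF g, of i j] by (cases "g i j = 0") auto
  finally show "mat_mult n (mat_one n) g i j = g i j" .
qed

lemma mat_mult_one_right: "g \<in> UT n \<Longrightarrow> mat_mult n g (mat_one n) = g"
proof (rule ext, rule ext)
  fix i j assume g: "g \<in> UT n"
  have "mat_mult n g (mat_one n) i j = (\<Sum>k\<in>{1..n}. if k = j then g i j else 0)"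
    unfolding mat_mult_def mat_one_def by (rule sum.cong) auto
  also have "\<dots> = g i j" using UT_nonzero_entry[OF g, of i j] by (cases "g i j = 0") auto
  finally show "mat_mult n g (mat_one n) i j = g i j" .
qed

lemma mat_mult_left_cancel:
  assumes x: "x \<in> UT n" and g: "g \<in> UT n" and h: "h \<in> UT n"
    and eq: "mat_mult n x g = mat_mult n x h"
  shows "g = h"
proof -
  have "\<forall>j. g i j = h i j" if "i \<in> {1..n}" for i
    using that
  proof (induction "n - i" arbitrary: i rule: less_induct)
    case less
    show ?case
    proof
      fix j
      have "(\<Sum>k\<in>{1..n} - {i}. x i k * g k j) = (\<Sum>k\<in>{1..n} - {i}. x i k * h k j)"
      proof (rule sum.cong)
        fix k assume k: "k \<in> {1..n} - {i}"
        show "x i k * g k j = x i k * h k j"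
        proof (cases "x i k = 0")
          case False
          with k UT_nonzero_entry[OF x] have "i < k" by force
          with k less.prems have "g k j = h k j" by (intro less.hyps[rule_format]) auto
          then show ?thesis by simp
        qed simp
      qed simp
      moreover have "(\<Sum>k\<in>{1..n}. x i k * g k j) = (\<Sum>k\<in>{1..n}. x i k * h k j)"
        using fun_cong[OF fun_cong[OF eq, of i], of j] by (simp add: mat_mult_def)
      ultimately have "x i i * g i j = x i i * h i j"
        using less.prems by (simp add: sum.remove[of _ i])
      then show "g i j = h i j"
        using UT_diag[OF x] less.prems by simp
    qed
  qed
  then show ?thesis
    using UT_entry_outside[OF g] UT_entry_outside[OF h] by (intro mat_eqI[where n = n]) blast+
qed

lemma UT_grp_simps [simp]:
  "carrier (UT_grp n) = UT n" "mult (UT_grp n) = mat_mult n" "one (UT_grp n) = mat_one n"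
  by (simp_all add: UT_grp_def)

lemma monoid_UT: "monoid (UT_grp n :: ('a::field) mat monoid)"
  by unfold_locales (auto simp: mat_mult_UT mat_one_UT mat_mult_assoc mat_mult_one_left mat_mult_one_right)

lemma UT_right_inverse:
  assumes x: "x \<in> (UT n :: ('a::{finite,field}) mat set)"
  shows "\<exists>y\<in>UT n. mat_mult n x y = mat_one n"
proof -
  have "mat_mult n x ` UT n = UT n"
    by (rule endo_inj_surj)
      (auto simp: finite_UT mat_mult_UT x inj_on_def intro: mat_mult_left_cancel[OF x])
  then show ?thesis using mat_one_UT by (metis imageE)
qed

lemma group_UT: "group (UT_grp n :: ('a::{finite,field}) mat monoid)"
proof (rule monoid.group_l_invI[OF monoid_UT])
  fix x :: "'a mat" assume "x \<in> carrier (UT_grp n)"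
  then obtain y where y: "y \<in> UT n" "mat_mult n x y = mat_one n"
    using UT_right_inverse by auto
  then obtain z where z: "z \<in> UT n" "mat_mult n y z = mat_one n"
    using UT_right_inverse by blast
  have "x = mat_mult n (mat_mult n x y) z"
    using z \<open>x \<in> carrier (UT_grp n)\<close> by (simp add: mat_mult_assoc mat_mult_one_right)
  also have "\<dots> = z" using y z by (simp add: mat_mult_one_left)
  finally have "mat_mult n y x = mat_one n" using z by simp
  with y show "\<exists>y\<in>carrier (UT_grp n). y \<otimes>\<^bsub>UT_grp n\<^esub> x = \<one>\<^bsub>UT_grp n\<^esub>" by auto
qed

lemma UT_inverse:
  fixes x :: "('a::{finite,field}) mat"
  assumes "x \<in> UT n"
  shows "m_inv (UT_grp n) x \<in> UT n"
    and "mat_mult n x (m_inv (UT_grp n) x) = mat_one n"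
    and "mat_mult n (m_inv (UT_grp n) x) x = mat_one n"
  using group.inv_closed[OF group_UT] group.r_inv[OF group_UT] group.l_inv[OF group_UT] assms
  by simp_all

section \<open>Normal pattern subgroups and their induced characters\<close>

definition normal_pattern :: "nat \<Rightarrow> (nat \<times> nat) set \<Rightarrow> bool" where
  "normal_pattern n \<pi> \<longleftrightarrow>
     (\<forall>i k j. 1 \<le> i \<and> i < k \<and> k < j \<and> j \<le> n \<and> (i, j) \<notin> \<pi> \<longrightarrow> (i, k) \<notin> \<pi> \<and> (k, j) \<notin> \<pi>)"

lemma nuio_normal_pattern: "nuio n \<pi> \<Longrightarrow> normal_pattern n \<pi>"
  unfolding nuio_def normal_pattern_def by fastforce

lemma UTpi_iff: "g \<in> UTpi n \<pi> \<longleftrightarrow> g \<in> UT n \<and> (\<forall>i j. i \<noteq> j \<and> g i j \<noteq> 0 \<longrightarrow> (i, j) \<in> \<pi>)"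
  by (simp add: UTpi_def)

lemma finite_UTpi: "finite (UTpi n \<pi> :: ('a::{finite,field}) mat set)"
  by (rule finite_subset[OF _ finite_UT]) (auto simp: UTpi_iff)

lemma mat_one_UTpi: "mat_one n \<in> UTpi n \<pi>"
  by (simp add: UTpi_iff mat_one_UT) (simp add: mat_one_def)

lemma mat_mult_UTpi_entry:
  assumes A: "A \<in> UT n" and B: "B \<in> UTpi n \<pi>" and \<pi>: "normal_pattern n \<pi>"
    and ij: "1 \<le> i" "i < j" "j \<le> n" "(i, j) \<notin> \<pi>"
  shows "mat_mult n A B i j = A i j"
proof -
  have BU: "B \<in> UT n" using B by (simp add: UTpi_iff)
  have "A i k * B k j = (if k = j then A i j else 0)" if "k \<in> {1..n}" for k
  proof (cases "k = j")
    case True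
    then show ?thesis using UT_diag[OF BU, of j] ij by simp
  next
    case False
    have "A i k = 0 \<or> B k j = 0"
    proof (rule ccontr)
      assume "\<not> (A i k = 0 \<or> B k j = 0)"
      then have "i \<le> k" "k < j" "(k, j) \<in> \<pi>"
        using UT_nonzero_entry[OF A, of i k] UT_nonzero_entry[OF BU, of k j] B False
        by (auto simp: UTpi_iff)
      with ij \<pi> show False
        unfolding normal_pattern_def by (metis le_neq_implies_less)
    qed
    with False show ?thesis by auto
  qed
  then show ?thesis
    using ij by (simp add: mat_mult_def)
qed

lemma mat_mult_UTpi_middle_entry:
  assumes A: "A \<in> UT n" and B: "B \<in> UTpi n \<pi>" and C: "C \<in> UT n" and \<pi>: "normal_pattern n \<pi>"
    and ij: "1 \<le> i" "i < j" "j \<le> n" "(i, j) \<notin> \<pi>"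
  shows "mat_mult n (mat_mult n A B) C i j = mat_mult n A C i j"
  unfolding mat_mult_def[of n "mat_mult n A B" C] mat_mult_def[of n A C]
proof (rule sum.cong)
  have AB: "mat_mult n A B \<in> UT n" using A B by (simp add: UTpi_iff mat_mult_UT)
  fix k assume "k \<in> {1..n}"
  show "mat_mult n A B i k * C k j = A i k * C k j"
  proof (cases "C k j = 0")
    case False
    then have "k \<le> j" using UT_nonzero_entry[OF C] by blast
    then consider "k < i" | "k = i" | "i < k" "k \<le> j" by linarith
    then show ?thesis
    proof cases
      case 1
      then have "mat_mult n A B i k = 0" "A i k = 0"
        using UT_nonzero_entry[OF AB, of i k] UT_nonzero_entry[OF A, of i k] by auto
      then show ?thesis by simp
    next
      case 2
      then show ?thesis using UT_diag[OF AB, of i] UT_diag[OF A, of i] ij by simp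
    next
      case 3
      then have "(i, k) \<notin> \<pi>" using \<pi> ij unfolding normal_pattern_def by (metis le_neq_implies_less)
      then show ?thesis using mat_mult_UTpi_entry[OF A B \<pi>, of i k] 3 ij by simp
    qed
  qed simp
qed simp

lemma mat_mult_conj_UTpi:
  assumes A: "A \<in> UT n" and B: "B \<in> UTpi n \<pi>" and C: "C \<in> UT n" and \<pi>: "normal_pattern n \<pi>"
    and AC: "mat_mult n A C = mat_one n"
  shows "mat_mult n (mat_mult n A B) C \<in> UTpi n \<pi>"
  unfolding UTpi_iff
proof (intro conjI allI impI)
  show M: "mat_mult n (mat_mult n A B) C \<in> UT n"
    using A B C by (simp add: UTpi_iff mat_mult_UT)
  fix i j assume nz: "i \<noteq> j \<and> mat_mult n (mat_mult n A B) C i j \<noteq> 0"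
  show "(i, j) \<in> \<pi>"
  proof (rule ccontr)
    assume "(i, j) \<notin> \<pi>"
    moreover have "1 \<le> i" "i < j" "j \<le> n" using nz UT_nonzero_entry[OF M, of i j] by auto
    ultimately have "mat_mult n (mat_mult n A B) C i j = mat_one n i j"
      using mat_mult_UTpi_middle_entry[OF A B C \<pi>] AC by simp
    with nz show False by (auto simp: mat_one_def)
  qed
qed

lemma mat_mult_conj_UTpi_iff:
  assumes A: "A \<in> UT n" and C: "C \<in> UT n" and g: "g \<in> UT n" and \<pi>: "normal_pattern n \<pi>"
    and AC: "mat_mult n A C = mat_one n" and CA: "mat_mult n C A = mat_one n"
  shows "mat_mult n (mat_mult n A g) C \<in> UTpi n \<pi> \<longleftrightarrow> g \<in> UTpi n \<pi>"
proof
  assume "mat_mult n (mat_mult n A g) C \<in> UTpi n \<pi>"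
  from mat_mult_conj_UTpi[OF C this A \<pi> CA]
  show "g \<in> UTpi n \<pi>"
    by (simp add: mat_mult_assoc CA mat_mult_one_right[OF g])
      (simp add: mat_mult_assoc[symmetric] CA mat_mult_one_left[OF g])
qed (rule mat_mult_conj_UTpi[OF A _ C \<pi> AC])

lemma indchar_normal_pattern:
  fixes g :: "('a::{finite,field}) mat"
  assumes "normal_pattern n \<pi>"
  shows "indchar n \<pi> g =
    (if g \<in> UTpi n \<pi> then of_nat (card (UT n :: 'a mat set)) / of_nat (card (UTpi n \<pi> :: 'a mat set))
     else 0)"
proof (cases "g \<in> UT n")
  case True
  have "{x \<in> UT n. mat_mult n (mat_mult n (m_inv (UT_grp n) x) g) x \<in> UTpi n \<pi>} =
      (if g \<in> UTpi n \<pi> then UT n else {})"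
    using mat_mult_conj_UTpi_iff[OF UT_inverse(1) _ True assms UT_inverse(3,2)] by auto
  with True show ?thesis by (simp add: indchar_def)
qed (auto simp: indchar_def UTpi_iff)

lemma indchar_cf:
  assumes "normal_pattern n \<pi>"
  shows "(indchar n \<pi> :: ('a::{finite,field}) mat \<Rightarrow> complex) \<in> cf n"
  unfolding cf_def
proof (intro CollectI conjI allI impI ballI)
  fix g :: "'a mat" assume "g \<notin> UT n"
  then show "indchar n \<pi> g = 0" by (simp add: indchar_def)
next
  fix g x :: "'a mat" assume g: "g \<in> UT n" and x: "x \<in> UT n"
  show "indchar n \<pi> (mat_mult n (mat_mult n x g) (m_inv (UT_grp n) x)) = indchar n \<pi> g"
    using mat_mult_conj_UTpi_iff[OF x UT_inverse(1)[OF x] g assms UT_inverse(2,3)[OF x]]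
    by (simp add: indchar_normal_pattern[OF assms])
qed

lemma card_UT_pos: "0 < card (UT n :: ('a::{finite,field}) mat set)"
  using finite_UT mat_one_UT card_gt_0_iff by blast

lemma card_UTpi_pos: "0 < card (UTpi n \<pi> :: ('a::{finite,field}) mat set)"
  using finite_UTpi mat_one_UTpi card_gt_0_iff by blast

definition indchar_in_degree ::
  "nat \<Rightarrow> (nat \<times> nat) set \<Rightarrow> nat \<Rightarrow> ('a::{finite,field}) mat \<Rightarrow> complex" where
  "indchar_in_degree m \<pi> n = (if n = m then indchar m \<pi> else (\<lambda>_. 0))"

lemma indchar_in_degree_scfUT:
  assumes "nuio m \<pi>"
  shows "(indchar_in_degree m \<pi> :: nat \<Rightarrow> ('a::{finite,field}) mat \<Rightarrow> complex) \<in> scfUT"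
proof -
  have "indchar_in_degree m \<pi> n \<in> (cf n :: ('a mat \<Rightarrow> complex) set)" for n
    using indchar_cf[OF nuio_normal_pattern[OF assms]] by (auto simp: indchar_in_degree_def cf_def)
  moreover have "finite {n. (indchar_in_degree m \<pi> n :: 'a mat \<Rightarrow> complex) \<noteq> (\<lambda>_. 0)}"
    by (rule finite_subset[of _ "{m}"]) (auto simp: indchar_in_degree_def)
  moreover have "indchar_in_degree m \<pi> n \<in> (scf n :: ('a mat \<Rightarrow> complex) set)" for n
  proof (cases "n = m")
    case True
    with assms show ?thesis
      unfolding scf_def by (intro CollectI exI[of _ "{indchar m \<pi>}"] exI[of _ "\<lambda>_. 1"])
        (auto simp: indchar_in_degree_def)
  next
    case False
    then show ?thesis
      unfolding scf_def by (intro CollectI exI[of _ "{}"] exI[of _ "\<lambda>_. 1"])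
        (auto simp: indchar_in_degree_def)
  qed
  ultimately show ?thesis by (simp add: scfUT_def cfUT_def)
qed

lemma nuio_Id_on: "nuio n (Id_on {1..n})"
  unfolding nuio_def partial_order_on_def preorder_on_def refl_on_def trans_def antisym_def
  by auto

section \<open>Transvections and noncommutativity\<close>

definition transvection :: "nat \<Rightarrow> nat \<Rightarrow> nat \<Rightarrow> ('a::field) mat" where
  "transvection n a b =
     (\<lambda>i j. if i = j \<and> 1 \<le> i \<and> i \<le> n then 1 else if i = a \<and> j = b then 1 else 0)"

lemma transvection_UT: "1 \<le> a \<Longrightarrow> a < b \<Longrightarrow> b \<le> n \<Longrightarrow> transvection n a b \<in> UT n"
  by (auto simp: UT_iff transvection_def split: if_splits)

lemma transvection_UTpi_iff:
  "1 \<le> a \<Longrightarrow> a < b \<Longrightarrow> b \<le> n \<Longrightarrow> transvection n a b \<in> UTpi n \<pi> \<longleftrightarrow> (a, b) \<in> \<pi>"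
  by (auto simp: UTpi_iff transvection_UT) (auto simp: transvection_def split: if_splits)

lemma transvection_mult_entry:
  assumes "a \<noteq> b" "b \<in> {1..n}" "i \<in> {1..n}"
  shows "mat_mult n (transvection n a b) r i j = r i j + (if i = a then r b j else 0)"
proof -
  have "mat_mult n (transvection n a b) r i j =
      (\<Sum>k\<in>{1..n}. (if k = i then r i j else 0) + (if k = b then (if i = a then r b j else 0) else 0))"
    unfolding mat_mult_def by (rule sum.cong) (use assms in \<open>auto simp: transvection_def\<close>)
  with assms show ?thesis by (simp add: sum.distrib)
qed

lemma cf_mult_noncommutative:
  "cf_mult (indchar_in_degree 1 (Id_on {1..1}) :: nat \<Rightarrow> ('a::{finite,field}) mat \<Rightarrow> complex)
       (indchar_in_degree 2 (Id_on {1..2}))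
   \<noteq> cf_mult (indchar_in_degree 2 (Id_on {1..2})) (indchar_in_degree 1 (Id_on {1..1}))"
proof -
  define g :: "'a mat" where "g = transvection 3 1 2"
  have g: "g \<in> UT 3" unfolding g_def by (rule transvection_UT) auto
  have blocks: "topblk 1 g = mat_one 1" "botblk 1 3 g = mat_one 2" "topblk 2 g = transvection 2 1 2"
    by (auto simp: g_def topblk_def botblk_def transvection_def mat_one_def fun_eq_iff)
  have "indchar 1 (Id_on {1..1}) (topblk 1 g) * indchar 2 (Id_on {1..2}) (botblk 1 3 g) \<noteq> 0"
    "indchar 2 (Id_on {1..2}) (topblk 2 g) = 0"
    unfolding blocks indchar_normal_pattern[OF nuio_normal_pattern[OF nuio_Id_on]]
    by (simp_all add: mat_one_UTpi transvection_UTpi_iff card_UT_pos card_UTpi_pos Id_on_iff)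
  moreover have "{0..3::nat} = {0, 1, 2, 3}" by auto
  ultimately have
    "cf_mult (indchar_in_degree 1 (Id_on {1..1})) (indchar_in_degree 2 (Id_on {1..2})) 3 g \<noteq>
     cf_mult (indchar_in_degree 2 (Id_on {1..2})) (indchar_in_degree 1 (Id_on {1..1})) 3 g"
    using g by (simp add: cf_mult_def indchar_in_degree_def)
  then show ?thesis by metis
qed

section \<open>The groups UR_I and the coproduct of induced characters\<close>

definition UR_support :: "nat \<Rightarrow> nat set \<Rightarrow> (nat \<times> nat) set" where
  "UR_support n I = {(i, j). 1 \<le> i \<and> i < j \<and> j \<le> n \<and> i \<in> I \<and> j \<notin> I}"

lemma UR_entry_outside_support:
  assumes r: "r \<in> UR n I" and ij: "(i, j) \<notin> UR_support n I"
  shows "r i j = mat_one n i j"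
proof (cases "i = j")
  case True
  with r show ?thesis by (simp add: UR_def UT_def mat_one_def)
next
  case False
  have "r i j = 0"
  proof (rule ccontr)
    assume "r i j \<noteq> 0"
    with r False have "i \<in> I" "j \<in> {1..n} - I" "1 \<le> i" "i \<le> j"
      by (auto simp: UR_def dest: UT_nonzero_entry)
    with False ij show False by (auto simp: UR_support_def)
  qed
  with False show ?thesis by (simp add: mat_one_def)
qed

lemma UR_iff: "r \<in> UR n I \<longleftrightarrow> (\<forall>i j. (i, j) \<notin> UR_support n I \<longrightarrow> r i j = mat_one n i j)"
proof
  assume H: "\<forall>i j. (i, j) \<notin> UR_support n I \<longrightarrow> r i j = mat_one n i j"
  have supp: "(i, j) \<in> UR_support n I" if "r i j \<noteq> 0" "i \<noteq> j" for i j
  proof (rule ccontr)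
    assume "(i, j) \<notin> UR_support n I"
    with H have "r i j = mat_one n i j" by blast
    with that show False by (simp add: mat_one_def)
  qed
  have "r \<in> UT n"
    unfolding UT_iff
  proof (intro conjI; intro allI impI)
    fix i j assume "r i j \<noteq> 0"
    then show "1 \<le> i \<and> i \<le> j \<and> j \<le> n"
      using H supp[of i j] by (cases "i = j") (auto simp: UR_support_def mat_one_def split: if_splits)
  next
    fix i assume "1 \<le> i \<and> i \<le> n"
    then show "r i i = 1" using H by (simp add: UR_support_def mat_one_def)
  qed
  then show "r \<in> UR n I"
    by (auto simp: UR_def UR_support_def dest: supp)
qed (use UR_entry_outside_support in blast)

lemma finite_UR: "finite (UR n I :: ('a::{finite,field}) mat set)"
  by (rule finite_subset[OF _ finite_UT]) (auto simp: UR_def)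

lemma mat_one_UR: "mat_one n \<in> UR n I"
  by (simp add: UR_iff)

lemma UR_eq_mat_one:
  assumes "r \<in> UR n I" "\<And>i j. (i, j) \<in> UR_support n I \<Longrightarrow> r i j = 0"
  shows "r = mat_one n"
proof (intro ext)
  fix i j
  show "r i j = mat_one n i j"
    using assms UR_entry_outside_support[OF assms(1), of i j]
    by (cases "(i, j) \<in> UR_support n I") (auto simp: UR_support_def mat_one_def)
qed

lemma card_UR:
  "card (UR n I :: ('a::{finite,field}) mat set) = card (UNIV :: 'a set) ^ card (UR_support n I)"
proof -
  let ?P = "UR_support n I"
  have finP: "finite ?P"
    by (rule finite_subset[of _ "{1..n} \<times> {1..n}"]) (auto simp: UR_support_def)
  have "bij_betw (\<lambda>r. restrict (case_prod r) ?P) (UR n I :: 'a mat set) (?P \<rightarrow>\<^sub>E UNIV)"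
  proof (rule bij_betw_byWitness[where f' = "\<lambda>f i j. if (i, j) \<in> ?P then f (i, j) else mat_one n i j"])
    show "\<forall>r\<in>UR n I. (\<lambda>i j. if (i, j) \<in> ?P then restrict (case_prod r) ?P (i, j) else mat_one n i j) = r"
      using UR_entry_outside_support by fastforce
    show "\<forall>f\<in>?P \<rightarrow>\<^sub>E UNIV. restrict (case_prod (\<lambda>i j. if (i, j) \<in> ?P then f (i, j) else mat_one n i j)) ?P = f"
      by (auto simp: PiE_def extensional_def fun_eq_iff)
    show "(\<lambda>r. restrict (case_prod r) ?P) ` UR n I \<subseteq> ?P \<rightarrow>\<^sub>E UNIV"
      by auto
    show "(\<lambda>f i j. if (i, j) \<in> ?P then f (i, j) else mat_one n i j) ` (?P \<rightarrow>\<^sub>E UNIV) \<subseteq> UR n I"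
      by (auto simp: UR_iff)
  qed
  then have "card (UR n I :: 'a mat set) = card (?P \<rightarrow>\<^sub>E (UNIV :: 'a set))"
    by (rule bij_betw_same_card)
  also have "\<dots> = card (UNIV :: 'a set) ^ card ?P"
    using finP by (simp add: card_PiE)
  finally show ?thesis .
qed

lemma transvection_mult_UR_UTpi_empty:
  assumes ab: "1 \<le> a" "a < b" "b \<le> n" "(a, b) \<notin> \<pi>" "(a, b) \<notin> UR_support n I"
  shows "{r \<in> UR n I. mat_mult n (transvection n a b) r \<in> UTpi n \<pi>} = {}"
proof -
  have "mat_mult n (transvection n a b) r \<notin> UTpi n \<pi>" if r: "r \<in> UR n I" for r
  proof -
    have "r a b = 0" "r b b = 1"
      using UR_entry_outside_support[OF r, of a b] UR_entry_outside_support[OF r, of b b] ab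
      by (auto simp: UR_support_def mat_one_def)
    with ab have "mat_mult n (transvection n a b) r a b = 1"
      by (simp add: transvection_mult_entry)
    with ab show ?thesis
      unfolding UTpi_iff by (metis less_irrefl zero_neq_one)
  qed
  then show ?thesis by blast
qed

lemma UR_mult_UTpi_eq_mat_one:
  assumes e: "e \<in> UTpi n \<pi>" and disjoint: "UR_support n I \<inter> \<pi> = {}"
    and fixes_support: "\<And>r i j. r \<in> UR n I \<Longrightarrow> (i, j) \<in> UR_support n I \<Longrightarrow> mat_mult n e r i j = r i j"
  shows "{r \<in> UR n I. mat_mult n e r \<in> UTpi n \<pi>} = {mat_one n}"
proof (intro equalityI subsetI)
  fix r assume "r \<in> {r \<in> UR n I. mat_mult n e r \<in> UTpi n \<pi>}"
  then have r: "r \<in> UR n I" and er: "mat_mult n e r \<in> UTpi n \<pi>" by auto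
  have "r i j = 0" if "(i, j) \<in> UR_support n I" for i j
    using fixes_support[OF r that] er disjoint that by (auto simp: UTpi_iff UR_support_def)
  then show "r \<in> {mat_one n}"
    using UR_eq_mat_one[OF r] by simp
qed (use e mat_one_UR in \<open>auto simp: mat_mult_one_right UTpi_iff\<close>)

lemma cf_comult_indchar_in_degree:
  fixes g h :: "('a::{finite,field}) mat"
  assumes \<pi>: "normal_pattern n \<pi>" and n: "a + b = n" and g: "g \<in> UT a" and h: "h \<in> UT b"
  shows "cf_comult (indchar_in_degree n \<pi>) a b (g, h) =
    of_nat (card (UT n :: 'a mat set)) / of_nat (card (UTpi n \<pi> :: 'a mat set)) *
    (\<Sum>I | I \<subseteq> {1..n} \<and> card I = a.
       of_nat (card {r \<in> UR n I. mat_mult n (embed I n g h) r \<in> UTpi n \<pi>}) /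
       of_nat (card (UR n I :: 'a mat set)))"
proof -
  let ?c = "of_nat (card (UT n :: 'a mat set)) / of_nat (card (UTpi n \<pi> :: 'a mat set)) :: complex"
  have "(\<Sum>r\<in>UR n I. indchar n \<pi> (mat_mult n e r)) =
      ?c * of_nat (card {r \<in> UR n I. mat_mult n e r \<in> UTpi n \<pi>})" for I and e :: "'a mat"
    by (simp add: indchar_normal_pattern[OF \<pi>] sum.If_cases[OF finite_UR] Int_def)
  with g h n show ?thesis
    by (simp add: cf_comult_def indchar_in_degree_def sum_distrib_left ac_simps)
qed

section \<open>Noncocommutativity\<close>

definition pi4 :: "(nat \<times> nat) set" where
  "pi4 = Id_on {1..4} \<union> {(1, 4), (2, 4)}"

lemma nuio_pi4: "nuio 4 pi4"
  unfolding nuio_def partial_order_on_def preorder_on_def refl_on_def trans_def antisym_def pi4_def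
  by auto

lemma atLeastAtMost_1_4: "{1..4::nat} = {1, 2, 3, 4}" "{Suc 0..4} = {1, 2, 3, 4}"
  by auto

lemma sum_subsets_card_1:
  "(\<Sum>I | I \<subseteq> {1..4::nat} \<and> card I = 1. f I) = f {1} + f {2} + f {3} + f {4}"
proof -
  have "{I. I \<subseteq> {1..4::nat} \<and> card I = 1} = (\<lambda>x. {x}) ` {1..4}"
    by (auto simp: card_1_singleton_iff)
  then show ?thesis
    by (simp add: sum.reindex atLeastAtMost_1_4 add.assoc)
qed

lemma sum_subsets_card_3:
  "(\<Sum>I | I \<subseteq> {1..4::nat} \<and> card I = 3. f I) = f {2, 3, 4} + f {1, 3, 4} + f {1, 2, 4} + f {1, 2, 3}"
proof -
  have "I \<subseteq> {1..4} \<and> card I = 3 \<longleftrightarrow> (\<exists>x\<in>{1..4}. I = {1..4} - {x})" for I :: "nat set"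
  proof
    assume I: "I \<subseteq> {1..4} \<and> card I = 3"
    then have "finite I" by (meson finite_atLeastAtMost finite_subset)
    with I have "card ({1..4::nat} - I) = 1" by (simp add: card_Diff_subset)
    then obtain x where "{1..4::nat} - I = {x}" by (auto simp: card_1_singleton_iff)
    with I have "I = {1..4} - {x}" "x \<in> {1..4}" by auto
    then show "\<exists>x\<in>{1..4}. I = {1..4} - {x}" by blast
  next
    assume "\<exists>x\<in>{1..4}. I = {1..4} - {x}"
    then show "I \<subseteq> {1..4} \<and> card I = 3" by (auto simp: card_Diff_singleton)
  qed
  then have "{I. I \<subseteq> {1..4::nat} \<and> card I = 3} = (\<lambda>x. {1..4} - {x}) ` {1..4}"
    by (simp add: image_def)
  moreover have "inj_on (\<lambda>x. {1..4::nat} - {x}) {1..4}"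
    by (auto simp: inj_on_def)
  ultimately have "(\<Sum>I | I \<subseteq> {1..4::nat} \<and> card I = 3. f I) = (\<Sum>x\<in>{1..4}. f ({1..4} - {x}))"
    by (simp only: sum.reindex o_def)
  also have "\<dots> = f {2, 3, 4} + f {1, 3, 4} + f {1, 2, 4} + f {1, 2, 3}"
    by (simp add: atLeastAtMost_1_4 insert_Diff_if add.assoc)
  finally show ?thesis .
qed

lemma cano_empty: "cano {} i = 0"
  by (simp add: cano_def)

lemma cano_insert:
  "finite A \<Longrightarrow> cano (insert a A) i = (if a \<le> i \<and> a \<notin> A then Suc (cano A i) else cano A i)"
proof -
  assume "finite A"
  moreover have "{k \<in> insert a A. k \<le> i} = (if a \<le> i then insert a {k \<in> A. k \<le> i} else {k \<in> A. k \<le> i})"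
    by auto
  ultimately show ?thesis by (auto simp: cano_def insert_absorb card_insert_if)
qed

lemma embed_outside: "I \<subseteq> {1..n} \<Longrightarrow> \<not> (i \<in> {1..n} \<and> j \<in> {1..n}) \<Longrightarrow> embed I n g h i j = 0"
  by (auto simp: embed_def Let_def)

lemma transvection_outside:
  "a \<in> {1..n} \<Longrightarrow> b \<in> {1..n} \<Longrightarrow> \<not> (i \<in> {1..n} \<and> j \<in> {1..n}) \<Longrightarrow> transvection n a b i j = 0"
  by (auto simp: transvection_def)

lemmas embed_simps =
  embed_def Let_def mat_one_def transvection_def insert_Diff_if cano_empty cano_insert atLeastAtMost_1_4

lemma embed_1_3:
  "embed {1} 4 (mat_one 1) (transvection 3 2 3) = (transvection 4 3 4 :: ('a::field) mat)"
  "embed {2} 4 (mat_one 1) (transvection 3 2 3) = (transvection 4 3 4 :: ('a::field) mat)"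
  "embed {3} 4 (mat_one 1) (transvection 3 2 3) = (transvection 4 2 4 :: ('a::field) mat)"
  "embed {4} 4 (mat_one 1) (transvection 3 2 3) = (transvection 4 2 3 :: ('a::field) mat)"
  by (rule mat_eqI[where n = 4]; (rule embed_outside transvection_outside; simp)?;
      auto simp: embed_simps)+

lemma embed_3_1:
  "embed {2, 3, 4} 4 (transvection 3 2 3) (mat_one 1) = (transvection 4 3 4 :: ('a::field) mat)"
  "embed {1, 3, 4} 4 (transvection 3 2 3) (mat_one 1) = (transvection 4 3 4 :: ('a::field) mat)"
  "embed {1, 2, 4} 4 (transvection 3 2 3) (mat_one 1) = (transvection 4 2 4 :: ('a::field) mat)"
  "embed {1, 2, 3} 4 (transvection 3 2 3) (mat_one 1) = (transvection 4 2 3 :: ('a::field) mat)"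
  by (rule mat_eqI[where n = 4]; (rule embed_outside transvection_outside; simp)?;
      auto simp: embed_simps)+

lemma transvection_24_UTpi_pi4: "transvection 4 2 4 \<in> UTpi 4 pi4"
  by (simp add: transvection_UTpi_iff pi4_def)

lemma UR_support_4_3: "UR_support 4 {3} = {(3, 4)}"
  by (auto simp: UR_support_def)

lemma UR_support_4_124: "UR_support 4 {1, 2, 4} = {(1, 3), (2, 3)}"
  by (auto simp: UR_support_def)

lemma UR_3_transvection_24:
  "{r \<in> UR 4 {3}. mat_mult 4 (transvection 4 2 4) r \<in> UTpi 4 pi4} = {mat_one 4 :: ('a::{finite,field}) mat}"
  by (rule UR_mult_UTpi_eq_mat_one[OF transvection_24_UTpi_pi4])
    (auto simp: UR_support_4_3 pi4_def transvection_mult_entry)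

lemma UR_124_transvection_24:
  "{r \<in> UR 4 {1, 2, 4}. mat_mult 4 (transvection 4 2 4) r \<in> UTpi 4 pi4} = {mat_one 4 :: ('a::{finite,field}) mat}"
proof (rule UR_mult_UTpi_eq_mat_one[OF transvection_24_UTpi_pi4])
  show "UR_support 4 {1, 2, 4} \<inter> pi4 = {}"
    by (auto simp: UR_support_4_124 pi4_def simp del: One_nat_def)
  fix r :: "'a mat" and i j
  assume r: "r \<in> UR 4 {1, 2, 4}" and ij: "(i, j) \<in> UR_support 4 {1, 2, 4}"
  have "r 4 3 = 0"
    using UR_entry_outside_support[OF r, of 4 3] by (simp add: UR_support_def mat_one_def)
  with ij show "mat_mult 4 (transvection 4 2 4) r i j = r i j"
    by (auto simp: UR_support_4_124 transvection_mult_entry simp del: One_nat_def)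
qed

lemma card_UR_3: "card (UR 4 {3} :: ('a::{finite,field}) mat set) = card (UNIV :: 'a set)"
  by (simp add: card_UR UR_support_4_3)

lemma card_UR_124: "card (UR 4 {1, 2, 4} :: ('a::{finite,field}) mat set) = card (UNIV :: 'a set) ^ 2"
  by (simp add: card_UR UR_support_4_124 power2_eq_square del: One_nat_def)

lemma transvection_UR_pi4_empty:
  assumes "(a, b) \<in> {(2, 3), (3, 4)}" "(a, b) \<notin> UR_support 4 I"
  shows "{r \<in> UR 4 I. mat_mult 4 (transvection 4 a b) r \<in> UTpi 4 pi4} = ({} :: ('a::{finite,field}) mat set)"
  using assms by (intro transvection_mult_UR_UTpi_empty) (auto simp: pi4_def)

lemma cf_comult_pi4_1_3:
  "cf_comult (indchar_in_degree 4 pi4 :: nat \<Rightarrow> ('a::{finite,field}) mat \<Rightarrow> complex) 1 3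
     (mat_one 1, transvection 3 2 3) =
   of_nat (card (UT 4 :: 'a mat set)) / of_nat (card (UTpi 4 pi4 :: 'a mat set)) /
   of_nat (card (UNIV :: 'a set))"
  by (simp add: cf_comult_indchar_in_degree nuio_normal_pattern[OF nuio_pi4] mat_one_UT transvection_UT
      sum_subsets_card_1 embed_1_3 transvection_UR_pi4_empty UR_support_def UR_3_transvection_24 card_UR_3
      del: One_nat_def)

lemma cf_comult_pi4_3_1:
  "cf_comult (indchar_in_degree 4 pi4 :: nat \<Rightarrow> ('a::{finite,field}) mat \<Rightarrow> complex) 3 1
     (transvection 3 2 3, mat_one 1) =
   of_nat (card (UT 4 :: 'a mat set)) / of_nat (card (UTpi 4 pi4 :: 'a mat set)) /
   of_nat (card (UNIV :: 'a set)) ^ 2"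
  by (simp add: cf_comult_indchar_in_degree nuio_normal_pattern[OF nuio_pi4] mat_one_UT transvection_UT
      sum_subsets_card_3 embed_3_1 transvection_UR_pi4_empty UR_support_def UR_124_transvection_24 card_UR_124
      del: One_nat_def)

lemma cf_comult_noncocommutative:
  "cf_comult (indchar_in_degree 4 pi4 :: nat \<Rightarrow> ('a::{finite,field}) mat \<Rightarrow> complex) \<noteq>
   (\<lambda>a b p. cf_comult (indchar_in_degree 4 pi4 :: nat \<Rightarrow> 'a mat \<Rightarrow> complex) b a (snd p, fst p))"
proof
  define c :: complex
    where "c = of_nat (card (UT 4 :: 'a mat set)) / of_nat (card (UTpi 4 pi4 :: 'a mat set))"
  define q :: complex where "q = of_nat (card (UNIV :: 'a set))"
  assume eq: "cf_comult (indchar_in_degree 4 pi4 :: nat \<Rightarrow> 'a mat \<Rightarrow> complex) =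
    (\<lambda>a b p. cf_comult (indchar_in_degree 4 pi4) b a (snd p, fst p))"
  have "cf_comult (indchar_in_degree 4 pi4 :: nat \<Rightarrow> 'a mat \<Rightarrow> complex) 1 3 (mat_one 1, transvection 3 2 3) =
      cf_comult (indchar_in_degree 4 pi4 :: nat \<Rightarrow> 'a mat \<Rightarrow> complex) 3 1 (transvection 3 2 3, mat_one 1)"
    using fun_cong[OF fun_cong[OF fun_cong[OF eq, of 1], of 3], of "(mat_one 1, transvection 3 2 3)"]
    by simp
  then have "c / q = c / q ^ 2"
    by (simp only: cf_comult_pi4_1_3 cf_comult_pi4_3_1 c_def q_def)
  moreover have "c \<noteq> 0"
    by (simp add: c_def card_UT_pos card_UTpi_pos)
  moreover have "card {0, 1 :: 'a} \<le> card (UNIV :: 'a set)"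
    by (rule card_mono) auto
  then have "q \<noteq> 0" "q \<noteq> 1"
    by (auto simp: q_def)
  ultimately have "q = 1"
    by (simp add: power2_eq_square divide_eq_eq eq_divide_eq)
  with \<open>q \<noteq> 1\<close> show False ..
qed

theorem theorem7p7:
  shows "noncommutative_on (cfUT :: (nat \<Rightarrow> ('a::{finite,field}) mat \<Rightarrow> complex) set) \<and>
         noncocommutative_on (cfUT :: (nat \<Rightarrow> 'a mat \<Rightarrow> complex) set) \<and>
         noncommutative_on (scfUT :: (nat \<Rightarrow> 'a mat \<Rightarrow> complex) set) \<and>
         noncocommutative_on (scfUT :: (nat \<Rightarrow> 'a mat \<Rightarrow> complex) set)"
proof -
  let ?x = "indchar_in_degree 1 (Id_on {1..1}) :: nat \<Rightarrow> 'a mat \<Rightarrow> complex"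
  let ?y = "indchar_in_degree 2 (Id_on {1..2}) :: nat \<Rightarrow> 'a mat \<Rightarrow> complex"
  let ?z = "indchar_in_degree 4 pi4 :: nat \<Rightarrow> 'a mat \<Rightarrow> complex"
  have scf: "?x \<in> scfUT" "?y \<in> scfUT" "?z \<in> scfUT"
    by (intro indchar_in_degree_scfUT nuio_Id_on nuio_pi4)+
  then have cf: "?x \<in> cfUT" "?y \<in> cfUT" "?z \<in> cfUT"
    by (simp_all add: scfUT_def)
  have "noncommutative_on A" if "?x \<in> A" "?y \<in> A" for A
    unfolding noncommutative_on_def using that cf_mult_noncommutative by blast
  moreover have "noncocommutative_on A" if "?z \<in> A" for A
    unfolding noncocommutative_on_def using that cf_comult_noncocommutative by blast
  ultimately show ?thesis
    using scf cf by simp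
qed

end
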